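(* Suppose that a $(v,k,\lambda)$-BIBD has a nesting. Then $k\ge 2\lambda+1$.
   Context: A $(v,k,\lambda)$-BIBD is a pair $(X,\mathcal{A})$ where $X$ is a set of $v$ points and $\mathcal{A}$ is a multiset of $k$-subsets of $X$ (blocks) such that every pair of distinct points lies in exactly $\lambda$ blocks; a partial $(v,k,\lambda)$-BIBD is defined the same way except that every pair lies in at most $\lambda$ blocks. A nesting of a $(v,k,\lambda)$-BIBD $(X,\mathcal{A})$ is a map $\phi:\mathcal{A}\to X$ such that $(X,\{A\cup\{\phi(A)\}: A\in\mathcal{A}\})$ (a multiset of blocks) is a partial $(v,k+1,\lambda+1)$-BIBD (in particular $\phi(A)\notin A$). *)

theory Defs
  imports Main
begin

text \<open>Blocks are given as an indexed family B over a finite index set I, so that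
  repeated blocks (the multiset of the paper) are distinct indices.
  The number of blocks containing two points x, y:\<close>

definition pair_count :: "'b set \<Rightarrow> ('b \<Rightarrow> 'a set) \<Rightarrow> 'a \<Rightarrow> 'a \<Rightarrow> nat" where
  "pair_count I B x y = card {i \<in> I. x \<in> B i \<and> y \<in> B i}"

definition is_bibd :: "'a set \<Rightarrow> 'b set \<Rightarrow> ('b \<Rightarrow> 'a set) \<Rightarrow> nat \<Rightarrow> nat \<Rightarrow> nat \<Rightarrow> bool" where
  "is_bibd X I B v k lam \<longleftrightarrow>
     finite X \<and> card X = v \<and> finite I \<and>
     2 \<le> k \<and> k < v \<and> 1 \<le> lam \<and>
     (\<forall>i\<in>I. B i \<subseteq> X \<and> card (B i) = k) \<and>
     (\<forall>x\<in>X. \<forall>y\<in>X. x \<noteq> y \<longrightarrow> pair_count I B x y = lam)"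

definition is_partial_bibd :: "'a set \<Rightarrow> 'b set \<Rightarrow> ('b \<Rightarrow> 'a set) \<Rightarrow> nat \<Rightarrow> nat \<Rightarrow> nat \<Rightarrow> bool" where
  "is_partial_bibd X I B v k lam \<longleftrightarrow>
     finite X \<and> card X = v \<and> finite I \<and>
     (\<forall>i\<in>I. B i \<subseteq> X \<and> card (B i) = k) \<and>
     (\<forall>x\<in>X. \<forall>y\<in>X. x \<noteq> y \<longrightarrow> pair_count I B x y \<le> lam)"

definition is_nesting :: "'a set \<Rightarrow> 'b set \<Rightarrow> ('b \<Rightarrow> 'a set) \<Rightarrow> nat \<Rightarrow> nat \<Rightarrow> nat \<Rightarrow> ('b \<Rightarrow> 'a) \<Rightarrow> bool" where
  "is_nesting X I B v k lam phi \<longleftrightarrow>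
     (\<forall>i\<in>I. phi i \<in> X) \<and>
     is_partial_bibd X I (\<lambda>i. insert (phi i) (B i)) v (k + 1) (lam + 1)"

end

theory Submission
  imports Defs
begin

text \<open>Count the incidences between blocks and ordered pairs of distinct points in two ways.
  For the design, b k (k-1) = v (v-1) lambda; for the nested design, where each pair
  lies in at most lambda+1 blocks, b (k+1) k \<le> v (v-1) (lambda+1). Subtracting gives
  2 b k \<le> v (v-1), and multiplying by lambda and using the first identity again gives
  2 b k lambda \<le> b k (k-1), that is 2 lambda \<le> k-1.\<close>

definition off_diag :: "'a set \<Rightarrow> ('a \<times> 'a) set" where
  "off_diag X = {p \<in> X \<times> X. fst p \<noteq> snd p}"

lemma finite_off_diag: "finite X \<Longrightarrow> finite (off_diag X)"
  unfolding off_diag_def by simp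

lemma card_off_diag:
  assumes "finite X"
  shows "card (off_diag X) = card X * (card X - 1)"
proof -
  have "off_diag X = X \<times> X - (\<lambda>x. (x, x)) ` X"
    unfolding off_diag_def by auto
  then have "card (off_diag X) = card (X \<times> X) - card ((\<lambda>x. (x, x)) ` X)"
    using assms by (simp add: card_Diff_subset image_subset_iff)
  also have "\<dots> = card X * card X - card X"
    by (simp add: card_image inj_on_def card_cartesian_product)
  finally show ?thesis
    by (simp add: diff_mult_distrib2)
qed

lemma sum_pair_count_off_diag:
  assumes "finite X" and "finite I"
    and blocks: "\<forall>i\<in>I. C i \<subseteq> X \<and> card (C i) = m"
  shows "(\<Sum>p\<in>off_diag X. pair_count I C (fst p) (snd p)) = card I * (m * (m - 1))"
proof -
  have "(\<Sum>p\<in>off_diag X. pair_count I C (fst p) (snd p))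
      = (\<Sum>p\<in>off_diag X. \<Sum>i\<in>I. if fst p \<in> C i \<and> snd p \<in> C i then 1 else 0)"
    unfolding pair_count_def
    by (rule sum.cong) (auto simp: sum.inter_filter[OF \<open>finite I\<close>, symmetric])
  also have "\<dots> = (\<Sum>i\<in>I. \<Sum>p\<in>off_diag X. if fst p \<in> C i \<and> snd p \<in> C i then 1 else 0)"
    by (rule sum.swap)
  also have "\<dots> = (\<Sum>i\<in>I. m * (m - 1))"
  proof (rule sum.cong)
    fix i assume "i \<in> I"
    then have "C i \<subseteq> X" and "card (C i) = m"
      using blocks by auto
    then have "{p \<in> off_diag X. fst p \<in> C i \<and> snd p \<in> C i} = off_diag (C i)"
      and "finite (C i)"
      using \<open>finite X\<close> finite_subset unfolding off_diag_def by auto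
    then show "(\<Sum>p\<in>off_diag X. if fst p \<in> C i \<and> snd p \<in> C i then 1 else 0) = m * (m - 1)"
      using \<open>card (C i) = m\<close> \<open>finite X\<close>
      by (simp add: sum.inter_filter[OF finite_off_diag, symmetric] card_off_diag)
  qed simp
  finally show ?thesis
    by simp
qed

lemma bibd_block_count:
  assumes "is_bibd X I B v k lam"
  shows "card I * (k * (k - 1)) = v * (v - 1) * lam"
proof -
  have "finite X" "card X = v" and sizes: "finite I" "\<forall>i\<in>I. B i \<subseteq> X \<and> card (B i) = k"
    and pairs: "\<forall>x\<in>X. \<forall>y\<in>X. x \<noteq> y \<longrightarrow> pair_count I B x y = lam"
    using assms unfolding is_bibd_def by auto
  have "card I * (k * (k - 1)) = (\<Sum>p\<in>off_diag X. pair_count I B (fst p) (snd p))"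
    using sum_pair_count_off_diag[OF \<open>finite X\<close> sizes] by simp
  also have "\<dots> = (\<Sum>p\<in>off_diag X. lam)"
    using pairs by (intro sum.cong) (auto simp: off_diag_def)
  finally show ?thesis
    using \<open>finite X\<close> \<open>card X = v\<close> by (simp add: card_off_diag)
qed

lemma partial_bibd_block_count_le:
  assumes "is_partial_bibd X I B v k lam"
  shows "card I * (k * (k - 1)) \<le> v * (v - 1) * lam"
proof -
  have "finite X" "card X = v" and sizes: "finite I" "\<forall>i\<in>I. B i \<subseteq> X \<and> card (B i) = k"
    and pairs: "\<forall>x\<in>X. \<forall>y\<in>X. x \<noteq> y \<longrightarrow> pair_count I B x y \<le> lam"
    using assms unfolding is_partial_bibd_def by auto
  have "card I * (k * (k - 1)) = (\<Sum>p\<in>off_diag X. pair_count I B (fst p) (snd p))"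
    using sum_pair_count_off_diag[OF \<open>finite X\<close> sizes] by simp
  also have "\<dots> \<le> (\<Sum>p\<in>off_diag X. lam)"
    using pairs by (intro sum_mono) (auto simp: off_diag_def)
  finally show ?thesis
    using \<open>finite X\<close> \<open>card X = v\<close> by (simp add: card_off_diag)
qed

theorem mainTheorem3:
  fixes X :: "'a set" and I :: "'b set" and B :: "'b \<Rightarrow> 'a set"
    and v k lam :: nat and phi :: "'b \<Rightarrow> 'a"
  assumes "is_bibd X I B v k lam"
    and "is_nesting X I B v k lam phi"
  shows "k \<ge> 2 * lam + 1"
proof -
  define b N where "b = card I" and "N = v * (v - 1)"
  have "2 \<le> k" "k < v" "1 \<le> lam"
    using assms(1) unfolding is_bibd_def by auto
  have design: "b * (k * (k - 1)) = N * lam"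
    using bibd_block_count[OF assms(1)] unfolding b_def N_def .
  have nested: "b * ((k + 1) * k) \<le> N * (lam + 1)"
    using partial_bibd_block_count_le assms(2) unfolding is_nesting_def b_def N_def by fastforce
  have "b * ((k + 1) * k) = b * (k * (k - 1)) + 2 * b * k"
    using \<open>2 \<le> k\<close> by (cases k) (auto simp: algebra_simps)
  with design nested have "2 * b * k \<le> N"
    by simp
  then have "b * k * (2 * lam) \<le> b * k * (k - 1)"
    using design by (simp add: algebra_simps)
  moreover have "0 < N * lam"
    using \<open>2 \<le> k\<close> \<open>k < v\<close> \<open>1 \<le> lam\<close> unfolding N_def by simp
  then have "0 < b * k"
    using design \<open>2 \<le> k\<close> by (metis mult_is_0 not_gr0)
  ultimately show ?thesis
    using \<open>2 \<le> k\<close> by simp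
qed

end
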